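(* Let $n\geq 1$. The classes $\alpha^{\mathrm{sgn}}_{\mathcal D}=\frac{1}{|\mathrm{Stab}_{S_n}(\Delta_{\mathcal D})|}\sum_{\sigma\in S_n}\sigma(\mu_{\Delta_{\mathcal D}})\in H^{|E\mathcal D|}(\mathbb{Z}\mathcal{A}_n;\mathbb{Q}_{\mathrm{sgn}})$, for $\mathcal D$ ranging over $\mathcal{D}^{\mathrm{sgn}}_n$, form a basis of $H^\bullet(\Gamma_n;\mathbb{Q}_{\mathrm{sgn}})$, identified with the subspace $H^\bullet(\mathbb{Z}\mathcal{A}_n;\mathbb{Q}_{\mathrm{sgn}})^{S_n}$ of $H^\bullet(\mathbb{Z}\mathcal{A}_n;\mathbb{Q}_{\mathrm{sgn}})$.
   Context: $\mathrm{Br}_n$ is the braid group on $n$ strands, $P_n$ the pure braid group, $\Gamma_n=\mathrm{Br}_n/[P_n,P_n]$, $\mathbb{Z}\mathcal{A}_n=P_n/[P_n,P_n]$, normal in $\Gamma_n$ with quotient $S_n$. $\mathbb{Q}_{\mathrm{sgn}}$ is the sign representation of $S_n$ viewed as a $\Gamma_n$-module (trivial on $\mathbb{Z}\mathcal A_n$); $H^\bullet(\Gamma_n;\mathbb{Q}_{\mathrm{sgn}})$ is identified via restriction with $H^\bullet(\mathbb{Z}\mathcal{A}_n;\mathbb{Q}_{\mathrm{sgn}})^{S_n}$. As $S_n$-module $H^\bullet(\mathbb{Z}\mathcal{A}_n;\mathbb{Q}_{\mathrm{sgn}})=\mathbb{Q}_{\mathrm{sgn}}\otimes\Lambda^\bullet$,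 where $\Lambda^\bullet=H^\bullet(\mathbb{Z}\mathcal A_n;\mathbb{Q})$ is the exterior algebra on $\omega_{ij}$ ($1\le i<j\le n$) with $\sigma(\omega_{ij})=\omega_{\sigma(i)\sigma(j)}$ if $\sigma(i)<\sigma(j)$, $\omega_{\sigma(j)\sigma(i)}$ otherwise. For a graph $\Delta$ on $\{1,\dots,n\}$ with lexicographically ordered edges $(i_1,j_1),\dots,(i_k,j_k)$, $\mu_\Delta=\omega_{i_1j_1}\cdots\omega_{i_kj_k}$; in twisted coefficients $\sigma(\mu_\Delta)=\mathrm{sgn}(\sigma)\mathrm{sgn}_\Delta(\sigma)\mu_{\sigma(\Delta)}$, where $\mathrm{sgn}_\Delta(\sigma)$ is the sign of the bijection induced by $\sigma$ between the ordered edge lists of $\Delta$ and $\sigma(\Delta)$. A graph $\Delta$ with $n$ vertices is skew-invariant if every automorphism $\sigma$ satisfies $\mathrm{sgn}(\sigma)\mathrm{sgn}_\Delta(\sigma)=1$ ($\mathrm{sgn}(\sigma)$ the sign on vertices, $\mathrm{sgn}_\Delta(\sigma)$ the sign on edges). $\mathcal D^{\mathrm{sgn}}_n$ is the set of isomorphism classes of skew-invariant graphs with exactly $n$ vertices, with a fixed representative $\Delta_{\mathcal D}\subset K_n$ for each; $|E\mathcal D|$ is the number of edges. *)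

theory Defs
  imports Complex_Main "HOL-Combinatorics.Permutations" "HOL-Library.Product_Lexorder"
begin

(* Vertices are 1..n; an edge of K_n is a pair (i,j) with 1 <= i < j <= n;
   a graph on {1..n} is a set of such edges. *)
definition Kn_edges :: "nat \<Rightarrow> (nat \<times> nat) set" where
  "Kn_edges n = {(i,j). 1 \<le> i \<and> i < j \<and> j \<le> n}"

definition Sn :: "nat \<Rightarrow> (nat \<Rightarrow> nat) set" where
  "Sn n = {\<sigma>. \<sigma> permutes {1..n}}"

definition eact :: "(nat \<Rightarrow> nat) \<Rightarrow> nat \<times> nat \<Rightarrow> nat \<times> nat" where
  "eact \<sigma> e = (min (\<sigma> (fst e)) (\<sigma> (snd e)), max (\<sigma> (fst e)) (\<sigma> (snd e)))"

definition gimg :: "(nat \<Rightarrow> nat) \<Rightarrow> (nat \<times> nat) set \<Rightarrow> (nat \<times> nat) set" where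
  "gimg \<sigma> \<Delta> = eact \<sigma> ` \<Delta>"

(* the bijection induced by sigma between the lexicographically ordered edge lists
   of Delta and sigma(Delta), as a permutation of positions {0..<|Delta|} *)
definition edge_perm :: "(nat \<Rightarrow> nat) \<Rightarrow> (nat \<times> nat) set \<Rightarrow> nat \<Rightarrow> nat" where
  "edge_perm \<sigma> \<Delta> i =
     (let xs = sorted_list_of_set \<Delta>; ys = sorted_list_of_set (gimg \<sigma> \<Delta>) in
      if i < length xs then (THE j. j < length ys \<and> ys ! j = eact \<sigma> (xs ! i)) else i)"

definition sgnE :: "(nat \<Rightarrow> nat) \<Rightarrow> (nat \<times> nat) set \<Rightarrow> int" where
  "sgnE \<sigma> \<Delta> = sign (edge_perm \<sigma> \<Delta>)"

(* Elements of H^*(ZA_n; Q_sgn) = Q_sgn (x) Lambda^*: coefficient functions on the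
   monomial basis mu_Delta, Delta ranging over graphs Delta \<subseteq> K_n. *)
definition Hspace :: "nat \<Rightarrow> ((nat \<times> nat) set \<Rightarrow> rat) set" where
  "Hspace n = {v. \<forall>\<Delta>. v \<Delta> \<noteq> 0 \<longrightarrow> \<Delta> \<subseteq> Kn_edges n}"

definition mu :: "(nat \<times> nat) set \<Rightarrow> (nat \<times> nat) set \<Rightarrow> rat" where
  "mu \<Delta> = (\<lambda>\<Gamma>. if \<Gamma> = \<Delta> then 1 else 0)"

(* twisted action: sigma(mu_Delta) = sgn(sigma) sgn_Delta(sigma) mu_{sigma(Delta)}, extended linearly *)
definition act :: "nat \<Rightarrow> (nat \<Rightarrow> nat) \<Rightarrow> ((nat \<times> nat) set \<Rightarrow> rat) \<Rightarrow> ((nat \<times> nat) set \<Rightarrow> rat)" where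
  "act n \<sigma> v = (\<lambda>\<Gamma>. \<Sum>\<Delta>\<in>Pow (Kn_edges n).
       if gimg \<sigma> \<Delta> = \<Gamma> then of_int (sign \<sigma> * sgnE \<sigma> \<Delta>) * v \<Delta> else 0)"

definition invariants :: "nat \<Rightarrow> ((nat \<times> nat) set \<Rightarrow> rat) set" where
  "invariants n = {v \<in> Hspace n. \<forall>\<sigma>\<in>Sn n. act n \<sigma> v = v}"

definition skew_invariant :: "nat \<Rightarrow> (nat \<times> nat) set \<Rightarrow> bool" where
  "skew_invariant n \<Delta> \<longleftrightarrow> \<Delta> \<subseteq> Kn_edges n \<and>
     (\<forall>\<sigma>\<in>Sn n. gimg \<sigma> \<Delta> = \<Delta> \<longrightarrow> sign \<sigma> * sgnE \<sigma> \<Delta> = 1)"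

definition graph_iso :: "nat \<Rightarrow> (nat \<times> nat) set \<Rightarrow> (nat \<times> nat) set \<Rightarrow> bool" where
  "graph_iso n \<Delta> \<Delta>' \<longleftrightarrow> (\<exists>\<sigma>\<in>Sn n. gimg \<sigma> \<Delta> = \<Delta>')"

definition stab :: "nat \<Rightarrow> (nat \<times> nat) set \<Rightarrow> (nat \<Rightarrow> nat) set" where
  "stab n \<Delta> = {\<sigma>\<in>Sn n. gimg \<sigma> \<Delta> = \<Delta>}"

definition alpha :: "nat \<Rightarrow> (nat \<times> nat) set \<Rightarrow> (nat \<times> nat) set \<Rightarrow> rat" where
  "alpha n \<Delta> = (\<lambda>\<Gamma>. (1 / of_nat (card (stab n \<Delta>))) * (\<Sum>\<sigma>\<in>Sn n. act n \<sigma> (mu \<Delta>) \<Gamma>))"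

definition sgn_reps :: "nat \<Rightarrow> (nat \<times> nat) set set \<Rightarrow> bool" where
  "sgn_reps n R \<longleftrightarrow> (\<forall>\<Delta>\<in>R. skew_invariant n \<Delta>) \<and>
     (\<forall>\<Delta>. skew_invariant n \<Delta> \<longrightarrow> (\<exists>\<Delta>'\<in>R. graph_iso n \<Delta> \<Delta>')) \<and>
     (\<forall>\<Delta>\<in>R. \<forall>\<Delta>'\<in>R. graph_iso n \<Delta> \<Delta>' \<longrightarrow> \<Delta> = \<Delta>')"

end

theory Submission
  imports Defs
begin

(* The twisted action permutes the monomials mu_Delta up to the sign
   twist sigma Delta = sgn(sigma) sgn_Delta(sigma), which is a cocycle for the action on graphs.
   Hence an invariant v satisfies v(sigma Delta) = twist sigma Delta * v Delta: it is determined by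
   its values on orbit representatives, and it vanishes on every graph having an automorphism of
   twist -1, i.e. on every graph that is not skew-invariant.  The class alpha_Delta is supported on
   the orbit of Delta, equals 1 at a skew-invariant Delta (its stabiliser acts with twist 1), and by
   orbit-stabiliser v Delta * alpha_Delta agrees with v on that orbit.  So the alpha's of the
   representatives have disjoint supports, and every invariant v is the sum of the
   v Delta * alpha_Delta. *)

lemma finite_Kn_edges: "finite (Kn_edges n)"
  by (rule finite_subset[of _ "{1..n} \<times> {1..n}"]) (auto simp: Kn_edges_def)

lemma Sn_permutes: "\<sigma> \<in> Sn n \<Longrightarrow> \<sigma> permutes {1..n}"
  by (simp add: Sn_def)

lemma id_in_Sn: "id \<in> Sn n"
  by (simp add: Sn_def permutes_id)

lemma inv_in_Sn: "\<sigma> \<in> Sn n \<Longrightarrow> inv \<sigma> \<in> Sn n"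
  by (simp add: Sn_def permutes_inv)

lemma comp_in_Sn: "\<sigma> \<in> Sn n \<Longrightarrow> \<tau> \<in> Sn n \<Longrightarrow> \<sigma> \<circ> \<tau> \<in> Sn n"
  by (simp add: Sn_def permutes_compose)

lemma finite_Sn: "finite (Sn n)"
  by (simp add: Sn_def finite_permutations)

lemma sign_comp_Sn: "\<sigma> \<in> Sn n \<Longrightarrow> \<tau> \<in> Sn n \<Longrightarrow> sign (\<tau> \<circ> \<sigma>) = sign \<tau> * sign \<sigma>"
  by (meson Sn_permutes finite_atLeastAtMost permutes_imp_permutation sign_compose)

subsection \<open>The action on edges and graphs\<close>

lemma eact_comp: "eact (\<sigma> \<circ> \<tau>) e = eact \<sigma> (eact \<tau> e)"
  by (cases "\<tau> (fst e) \<le> \<tau> (snd e)") (auto simp: eact_def min_def max_def)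

lemma gimg_comp: "gimg (\<sigma> \<circ> \<tau>) \<Delta> = gimg \<sigma> (gimg \<tau> \<Delta>)"
  by (auto simp: gimg_def eact_comp image_image)

lemma eact_in_Kn_edges:
  assumes "\<sigma> \<in> Sn n" and "e \<in> Kn_edges n"
  shows "eact \<sigma> e \<in> Kn_edges n"
proof -
  obtain a b where e: "e = (a, b)" "1 \<le> a" "a < b" "b \<le> n"
    using assms(2) by (auto simp: Kn_edges_def)
  have p: "\<sigma> permutes {1..n}" using assms(1) by (rule Sn_permutes)
  have "a \<in> {1..n}" "b \<in> {1..n}" using e by auto
  then have "\<sigma> a \<in> {1..n}" "\<sigma> b \<in> {1..n}" by (simp_all only: permutes_in_image[OF p])
  moreover have "\<sigma> a \<noteq> \<sigma> b" using e permutes_inj[OF p] by (metis inj_eq less_irrefl)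
  ultimately show ?thesis using e by (auto simp: eact_def Kn_edges_def min_def max_def)
qed

lemma inj_on_eact_Kn_edges:
  assumes "\<sigma> \<in> Sn n"
  shows "inj_on (eact \<sigma>) (Kn_edges n)"
proof
  fix x y assume x: "x \<in> Kn_edges n" and y: "y \<in> Kn_edges n" and eq: "eact \<sigma> x = eact \<sigma> y"
  have inj: "inj \<sigma>" using permutes_inj[OF Sn_permutes[OF assms]] .
  obtain a b where x_ab: "x = (a, b)" "a < b" using x by (auto simp: Kn_edges_def)
  obtain c d where y_cd: "y = (c, d)" "c < d" using y by (auto simp: Kn_edges_def)
  have "\<sigma> ` {a, b} = \<sigma> ` {c, d}"
    using eq x_ab y_cd by (auto simp: eact_def min_def max_def split: if_splits)
  then have "{a, b} = {c, d}" using inj by (simp only: inj_image_eq_iff)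
  then show "x = y" using x_ab y_cd by (auto simp: doubleton_eq_iff)
qed

lemma gimg_subset_Kn_edges: "\<sigma> \<in> Sn n \<Longrightarrow> \<Delta> \<subseteq> Kn_edges n \<Longrightarrow> gimg \<sigma> \<Delta> \<subseteq> Kn_edges n"
  using eact_in_Kn_edges by (auto simp: gimg_def)

lemma card_gimg: "\<sigma> \<in> Sn n \<Longrightarrow> \<Delta> \<subseteq> Kn_edges n \<Longrightarrow> card (gimg \<sigma> \<Delta>) = card \<Delta>"
  unfolding gimg_def by (meson card_image inj_on_eact_Kn_edges inj_on_subset)

lemma gimg_id: "\<Delta> \<subseteq> Kn_edges n \<Longrightarrow> gimg id \<Delta> = \<Delta>"
  by (force simp: gimg_def eact_def Kn_edges_def)

lemma gimg_inv_gimg: "\<sigma> \<in> Sn n \<Longrightarrow> \<Delta> \<subseteq> Kn_edges n \<Longrightarrow> gimg (inv \<sigma>) (gimg \<sigma> \<Delta>) = \<Delta>"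
  by (metis gimg_comp gimg_id Sn_permutes permutes_inv_o(2))

lemma gimg_gimg_inv: "\<sigma> \<in> Sn n \<Longrightarrow> \<Delta> \<subseteq> Kn_edges n \<Longrightarrow> gimg \<sigma> (gimg (inv \<sigma>) \<Delta>) = \<Delta>"
  by (metis gimg_comp gimg_id Sn_permutes permutes_inv_o(1))

lemma finite_stab: "finite (stab n \<Delta>)"
  using finite_Sn by (auto simp: stab_def)

lemma card_stab_pos: "\<Delta> \<subseteq> Kn_edges n \<Longrightarrow> card (stab n \<Delta>) > 0"
  using finite_stab[of n \<Delta>] id_in_Sn[of n] gimg_id[of \<Delta> n]
  by (auto simp: card_gt_0_iff stab_def)

lemma card_coset_stab:
  assumes \<sigma>0: "\<sigma>0 \<in> Sn n" and \<Delta>: "\<Delta> \<subseteq> Kn_edges n"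
  shows "card {\<sigma> \<in> Sn n. gimg \<sigma> \<Delta> = gimg \<sigma>0 \<Delta>} = card (stab n \<Delta>)"
proof -
  have p: "\<sigma>0 permutes {1..n}" using \<sigma>0 by (rule Sn_permutes)
  have "inj_on ((\<circ>) \<sigma>0) (stab n \<Delta>)"
    by (rule inj_onI) (metis comp_assoc permutes_inv_o(2)[OF p] id_comp)
  moreover have "(\<circ>) \<sigma>0 ` stab n \<Delta> = {\<sigma> \<in> Sn n. gimg \<sigma> \<Delta> = gimg \<sigma>0 \<Delta>}"
  proof
    show "(\<circ>) \<sigma>0 ` stab n \<Delta> \<subseteq> {\<sigma> \<in> Sn n. gimg \<sigma> \<Delta> = gimg \<sigma>0 \<Delta>}"
      using \<sigma>0 by (auto simp: stab_def comp_in_Sn gimg_comp)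
  next
    show "{\<sigma> \<in> Sn n. gimg \<sigma> \<Delta> = gimg \<sigma>0 \<Delta>} \<subseteq> (\<circ>) \<sigma>0 ` stab n \<Delta>"
    proof
      fix \<sigma> assume "\<sigma> \<in> {\<sigma> \<in> Sn n. gimg \<sigma> \<Delta> = gimg \<sigma>0 \<Delta>}"
      then have \<sigma>: "\<sigma> \<in> Sn n" and eq: "gimg \<sigma> \<Delta> = gimg \<sigma>0 \<Delta>" by auto
      have "inv \<sigma>0 \<circ> \<sigma> \<in> stab n \<Delta>"
        using comp_in_Sn[OF inv_in_Sn[OF \<sigma>0] \<sigma>] eq gimg_inv_gimg[OF \<sigma>0 \<Delta>]
        by (simp add: stab_def gimg_comp)
      moreover have "\<sigma> = \<sigma>0 \<circ> (inv \<sigma>0 \<circ> \<sigma>)"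
        by (simp add: o_assoc permutes_inv_o(1)[OF p])
      ultimately show "\<sigma> \<in> (\<circ>) \<sigma>0 ` stab n \<Delta>" by blast
    qed
  qed
  ultimately show ?thesis using card_image by fastforce
qed

subsection \<open>The sign of the induced permutation of edges\<close>

lemma edge_perm_nth:
  assumes fin: "finite \<Delta>" and inj: "inj_on (eact \<sigma>) \<Delta>" and i: "i < card \<Delta>"
  shows "edge_perm \<sigma> \<Delta> i < card \<Delta>"
    and "sorted_list_of_set (gimg \<sigma> \<Delta>) ! edge_perm \<sigma> \<Delta> i = eact \<sigma> (sorted_list_of_set \<Delta> ! i)"
proof -
  define xs where "xs = sorted_list_of_set \<Delta>"
  define ys where "ys = sorted_list_of_set (gimg \<sigma> \<Delta>)"
  have len_xs: "length xs = card \<Delta>" by (simp add: xs_def)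
  have len_ys: "length ys = card \<Delta>" using inj by (simp add: ys_def gimg_def card_image)
  have "xs ! i \<in> \<Delta>" using i fin len_xs by (metis nth_mem set_sorted_list_of_set xs_def)
  then have "eact \<sigma> (xs ! i) \<in> set ys" using fin by (simp add: ys_def gimg_def)
  then obtain j where j: "j < length ys" "ys ! j = eact \<sigma> (xs ! i)" by (auto simp: in_set_conv_nth)
  have "\<exists>!j. j < length ys \<and> ys ! j = eact \<sigma> (xs ! i)"
    using j distinct_sorted_list_of_set[of "gimg \<sigma> \<Delta>"] by (metis ys_def nth_eq_iff_index_eq)
  moreover have "edge_perm \<sigma> \<Delta> i = (THE j. j < length ys \<and> ys ! j = eact \<sigma> (xs ! i))"
    using i len_xs by (simp add: edge_perm_def Let_def xs_def ys_def)
  ultimately have "edge_perm \<sigma> \<Delta> i < length ys \<and> ys ! edge_perm \<sigma> \<Delta> i = eact \<sigma> (xs ! i)"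
    using theI' by simp
  then show "edge_perm \<sigma> \<Delta> i < card \<Delta>"
    and "sorted_list_of_set (gimg \<sigma> \<Delta>) ! edge_perm \<sigma> \<Delta> i = eact \<sigma> (sorted_list_of_set \<Delta> ! i)"
    using len_ys by (simp_all add: xs_def ys_def)
qed

lemma edge_perm_eqI:
  assumes fin: "finite \<Delta>" and inj: "inj_on (eact \<sigma>) \<Delta>" and i: "i < card \<Delta>" and j: "j < card \<Delta>"
    and eq: "sorted_list_of_set (gimg \<sigma> \<Delta>) ! j = eact \<sigma> (sorted_list_of_set \<Delta> ! i)"
  shows "edge_perm \<sigma> \<Delta> i = j"
proof -
  have "length (sorted_list_of_set (gimg \<sigma> \<Delta>)) = card \<Delta>"
    using inj by (simp add: gimg_def card_image)
  then show ?thesis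
    using edge_perm_nth[OF fin inj i] j eq distinct_sorted_list_of_set
    by (metis nth_eq_iff_index_eq)
qed

lemma edge_perm_outside: "\<not> i < card \<Delta> \<Longrightarrow> edge_perm \<sigma> \<Delta> i = i"
  by (simp add: edge_perm_def Let_def)

lemma edge_perm_permutes:
  assumes fin: "finite \<Delta>" and inj: "inj_on (eact \<sigma>) \<Delta>"
  shows "edge_perm \<sigma> \<Delta> permutes {..<card \<Delta>}"
proof (rule bij_imp_permutes)
  let ?f = "edge_perm \<sigma> \<Delta>"
  define xs where "xs = sorted_list_of_set \<Delta>"
  have len_xs: "length xs = card \<Delta>" and set_xs: "set xs = \<Delta>"
    using fin by (simp_all add: xs_def)
  have inj_f: "inj_on ?f {..<card \<Delta>}"
  proof
    fix i i' assume i: "i \<in> {..<card \<Delta>}" and i': "i' \<in> {..<card \<Delta>}" and eq: "?f i = ?f i'"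
    have "eact \<sigma> (xs ! i) = eact \<sigma> (xs ! i')"
      using edge_perm_nth(2)[OF fin inj, of i] edge_perm_nth(2)[OF fin inj, of i'] i i' eq
      by (simp add: xs_def)
    moreover have "xs ! i \<in> \<Delta>" "xs ! i' \<in> \<Delta>" using i i' len_xs set_xs by auto
    ultimately have "xs ! i = xs ! i'" using inj by (meson inj_onD)
    then show "i = i'" using i i' len_xs by (simp add: xs_def nth_eq_iff_index_eq)
  qed
  have "?f ` {..<card \<Delta>} \<subseteq> {..<card \<Delta>}" using edge_perm_nth(1)[OF fin inj] by auto
  then have "?f ` {..<card \<Delta>} = {..<card \<Delta>}" using endo_inj_surj inj_f by blast
  then show "bij_betw ?f {..<card \<Delta>} {..<card \<Delta>}" using inj_f by (simp add: bij_betw_def)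
  show "\<And>x. x \<notin> {..<card \<Delta>} \<Longrightarrow> ?f x = x" using edge_perm_outside by auto
qed

lemma edge_perm_comp:
  assumes fin: "finite \<Delta>" and inj_\<sigma>: "inj_on (eact \<sigma>) \<Delta>" and inj_\<tau>: "inj_on (eact \<tau>) (gimg \<sigma> \<Delta>)"
  shows "edge_perm (\<tau> \<circ> \<sigma>) \<Delta> = edge_perm \<tau> (gimg \<sigma> \<Delta>) \<circ> edge_perm \<sigma> \<Delta>"
proof
  fix i
  have fin': "finite (gimg \<sigma> \<Delta>)" using fin by (simp add: gimg_def)
  have card_eq: "card (gimg \<sigma> \<Delta>) = card \<Delta>" using inj_\<sigma> by (simp add: gimg_def card_image)
  have "eact (\<tau> \<circ> \<sigma>) = eact \<tau> \<circ> eact \<sigma>" by (simp add: fun_eq_iff eact_comp)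
  then have inj_\<tau>\<sigma>: "inj_on (eact (\<tau> \<circ> \<sigma>)) \<Delta>"
    using comp_inj_on[OF inj_\<sigma>] inj_\<tau> by (simp add: gimg_def)
  show "edge_perm (\<tau> \<circ> \<sigma>) \<Delta> i = (edge_perm \<tau> (gimg \<sigma> \<Delta>) \<circ> edge_perm \<sigma> \<Delta>) i"
  proof (cases "i < card \<Delta>")
    case False
    then show ?thesis using edge_perm_outside card_eq by simp
  next
    case True
    define j where "j = edge_perm \<sigma> \<Delta> i"
    have j: "j < card \<Delta>"
      "sorted_list_of_set (gimg \<sigma> \<Delta>) ! j = eact \<sigma> (sorted_list_of_set \<Delta> ! i)"
      using edge_perm_nth[OF fin inj_\<sigma> True] by (simp_all add: j_def)
    have k: "edge_perm \<tau> (gimg \<sigma> \<Delta>) j < card \<Delta>"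
      "sorted_list_of_set (gimg \<tau> (gimg \<sigma> \<Delta>)) ! edge_perm \<tau> (gimg \<sigma> \<Delta>) j
        = eact \<tau> (sorted_list_of_set (gimg \<sigma> \<Delta>) ! j)"
      using edge_perm_nth[OF fin' inj_\<tau>, of j] j(1) card_eq by simp_all
    have "edge_perm (\<tau> \<circ> \<sigma>) \<Delta> i = edge_perm \<tau> (gimg \<sigma> \<Delta>) j"
      using k j(2) by (intro edge_perm_eqI[OF fin inj_\<tau>\<sigma> True]) (simp_all add: gimg_comp eact_comp)
    then show ?thesis by (simp add: j_def)
  qed
qed

lemma sgnE_comp:
  assumes "finite \<Delta>" and "inj_on (eact \<sigma>) \<Delta>" and "inj_on (eact \<tau>) (gimg \<sigma> \<Delta>)"
  shows "sgnE (\<tau> \<circ> \<sigma>) \<Delta> = sgnE \<tau> (gimg \<sigma> \<Delta>) * sgnE \<sigma> \<Delta>"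
proof -
  have "finite (gimg \<sigma> \<Delta>)" using assms(1) by (simp add: gimg_def)
  then have "permutation (edge_perm \<tau> (gimg \<sigma> \<Delta>))" "permutation (edge_perm \<sigma> \<Delta>)"
    using edge_perm_permutes assms permutes_imp_permutation by blast+
  then show ?thesis unfolding sgnE_def edge_perm_comp[OF assms] by (rule sign_compose)
qed

definition twist :: "(nat \<Rightarrow> nat) \<Rightarrow> (nat \<times> nat) set \<Rightarrow> rat" where
  "twist \<sigma> \<Delta> = of_int (sign \<sigma> * sgnE \<sigma> \<Delta>)"

lemma twist_comp:
  assumes \<sigma>: "\<sigma> \<in> Sn n" and \<tau>: "\<tau> \<in> Sn n" and \<Delta>: "\<Delta> \<subseteq> Kn_edges n"
  shows "twist (\<tau> \<circ> \<sigma>) \<Delta> = twist \<tau> (gimg \<sigma> \<Delta>) * twist \<sigma> \<Delta>"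
proof -
  have fin: "finite \<Delta>" using \<Delta> finite_Kn_edges finite_subset by blast
  have inj_\<sigma>: "inj_on (eact \<sigma>) \<Delta>" using inj_on_eact_Kn_edges[OF \<sigma>] \<Delta> inj_on_subset by blast
  have inj_\<tau>: "inj_on (eact \<tau>) (gimg \<sigma> \<Delta>)"
    using inj_on_eact_Kn_edges[OF \<tau>] gimg_subset_Kn_edges[OF \<sigma> \<Delta>] inj_on_subset by blast
  show ?thesis
    unfolding twist_def sgnE_comp[OF fin inj_\<sigma> inj_\<tau>] sign_comp_Sn[OF \<sigma> \<tau>] by simp
qed

lemma twist_cases: "twist \<sigma> \<Delta> = 1 \<or> twist \<sigma> \<Delta> = -1"
  unfolding twist_def sgnE_def
  by (cases rule: sign_cases[of \<sigma>]; cases rule: sign_cases[of "edge_perm \<sigma> \<Delta>"]) auto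

subsection \<open>The twisted action and the classes alpha\<close>

lemma act_eq:
  assumes \<sigma>: "\<sigma> \<in> Sn n"
  shows "act n \<sigma> v \<Gamma> =
    (if \<Gamma> \<subseteq> Kn_edges n then twist \<sigma> (gimg (inv \<sigma>) \<Gamma>) * v (gimg (inv \<sigma>) \<Gamma>) else 0)"
proof -
  have "{\<Delta> \<in> Pow (Kn_edges n). gimg \<sigma> \<Delta> = \<Gamma>} =
     (if \<Gamma> \<subseteq> Kn_edges n then {gimg (inv \<sigma>) \<Gamma>} else {})"
  proof (cases "\<Gamma> \<subseteq> Kn_edges n")
    case True
    then have "\<Delta> \<in> Pow (Kn_edges n) \<and> gimg \<sigma> \<Delta> = \<Gamma> \<longleftrightarrow> \<Delta> = gimg (inv \<sigma>) \<Gamma>" for \<Delta>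
      using gimg_inv_gimg[OF \<sigma>] gimg_gimg_inv[OF \<sigma>] gimg_subset_Kn_edges[OF inv_in_Sn[OF \<sigma>] True]
      by auto
    then show ?thesis using True by auto
  next
    case False
    then show ?thesis using gimg_subset_Kn_edges[OF \<sigma>] by auto
  qed
  moreover have "act n \<sigma> v \<Gamma> = (\<Sum>\<Delta> \<in> {\<Delta> \<in> Pow (Kn_edges n). gimg \<sigma> \<Delta> = \<Gamma>}. twist \<sigma> \<Delta> * v \<Delta>)"
    unfolding act_def twist_def by (simp only: sum.inter_filter finite_Pow_iff finite_Kn_edges)
  ultimately show ?thesis by simp
qed

lemma act_gimg:
  assumes "\<sigma> \<in> Sn n" and "\<Delta> \<subseteq> Kn_edges n"
  shows "act n \<sigma> v (gimg \<sigma> \<Delta>) = twist \<sigma> \<Delta> * v \<Delta>"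
  using act_eq[OF assms(1)] gimg_inv_gimg[OF assms] gimg_subset_Kn_edges[OF assms] by simp

lemma act_mu:
  assumes \<sigma>: "\<sigma> \<in> Sn n" and \<Delta>: "\<Delta> \<subseteq> Kn_edges n"
  shows "act n \<sigma> (mu \<Delta>) \<Gamma> = (if gimg \<sigma> \<Delta> = \<Gamma> then twist \<sigma> \<Delta> else 0)"
proof (cases "\<Gamma> \<subseteq> Kn_edges n")
  case True
  then have "gimg (inv \<sigma>) \<Gamma> = \<Delta> \<longleftrightarrow> gimg \<sigma> \<Delta> = \<Gamma>"
    using \<Delta> gimg_inv_gimg[OF \<sigma>] gimg_gimg_inv[OF \<sigma>] by auto
  then show ?thesis using act_eq[OF \<sigma>, of "mu \<Delta>" \<Gamma>] True by (auto simp: mu_def)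
next
  case False
  then show ?thesis using act_eq[OF \<sigma>] gimg_subset_Kn_edges[OF \<sigma> \<Delta>] by auto
qed

lemma alpha_eq:
  assumes "\<Delta> \<subseteq> Kn_edges n"
  shows "alpha n \<Delta> \<Gamma> =
    (\<Sum>\<sigma> \<in> Sn n. if gimg \<sigma> \<Delta> = \<Gamma> then twist \<sigma> \<Delta> else 0) / of_nat (card (stab n \<Delta>))"
  using act_mu[OF _ assms] by (simp add: alpha_def)

lemma alpha_nonzero_imp_orbit:
  assumes "\<Delta> \<subseteq> Kn_edges n" and "alpha n \<Delta> \<Gamma> \<noteq> 0"
  shows "\<exists>\<sigma> \<in> Sn n. gimg \<sigma> \<Delta> = \<Gamma>"
proof (rule ccontr)
  assume "\<not> ?thesis"
  then have "(\<Sum>\<sigma> \<in> Sn n. if gimg \<sigma> \<Delta> = \<Gamma> then twist \<sigma> \<Delta> else 0) = 0"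
    by (intro sum.neutral) auto
  then show False using assms alpha_eq by simp
qed

lemma card_eq_if_alpha_nonzero:
  "\<Delta> \<subseteq> Kn_edges n \<Longrightarrow> alpha n \<Delta> \<Gamma> \<noteq> 0 \<Longrightarrow> card \<Gamma> = card \<Delta>"
  using alpha_nonzero_imp_orbit card_gimg by metis

lemma act_alpha:
  assumes \<tau>: "\<tau> \<in> Sn n" and \<Delta>: "\<Delta> \<subseteq> Kn_edges n"
  shows "act n \<tau> (alpha n \<Delta>) = alpha n \<Delta>"
proof
  fix \<Gamma>
  show "act n \<tau> (alpha n \<Delta>) \<Gamma> = alpha n \<Delta> \<Gamma>"
  proof (cases "\<Gamma> \<subseteq> Kn_edges n")
    case False
    moreover have "alpha n \<Delta> \<Gamma> = 0"
      using False alpha_nonzero_imp_orbit[OF \<Delta>] gimg_subset_Kn_edges[OF _ \<Delta>] by blast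
    ultimately show ?thesis using act_eq[OF \<tau>] by simp
  next
    case True
    define G where "G = gimg (inv \<tau>) \<Gamma>"
    define h where "h = (\<lambda>\<sigma>. if gimg \<sigma> \<Delta> = \<Gamma> then twist \<sigma> \<Delta> else 0)"
    have "twist \<tau> G * (if gimg \<sigma> \<Delta> = G then twist \<sigma> \<Delta> else 0) = h (\<tau> \<circ> \<sigma>)"
      if \<sigma>: "\<sigma> \<in> Sn n" for \<sigma>
    proof -
      have "gimg \<sigma> \<Delta> = G \<longleftrightarrow> gimg (\<tau> \<circ> \<sigma>) \<Delta> = \<Gamma>"
        using gimg_inv_gimg[OF \<tau> gimg_subset_Kn_edges[OF \<sigma> \<Delta>]] gimg_gimg_inv[OF \<tau> True]
        by (auto simp: G_def gimg_comp)
      then show ?thesis unfolding h_def using twist_comp[OF \<sigma> \<tau> \<Delta>] by auto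
    qed
    then have "act n \<tau> (alpha n \<Delta>) \<Gamma> = (\<Sum>\<sigma> \<in> Sn n. h (\<tau> \<circ> \<sigma>)) / of_nat (card (stab n \<Delta>))"
      using act_eq[OF \<tau>] True by (simp add: alpha_eq[OF \<Delta>] G_def sum_distrib_left)
    also have "(\<Sum>\<sigma> \<in> Sn n. h (\<tau> \<circ> \<sigma>)) = (\<Sum>\<sigma> \<in> Sn n. h \<sigma>)"
      unfolding Sn_def using setum_permutations_compose_left[OF Sn_permutes[OF \<tau>], of h] by simp
    finally show ?thesis using alpha_eq[OF \<Delta>, of \<Gamma>] by (simp add: h_def)
  qed
qed

lemma alpha_in_invariants:
  assumes "\<Delta> \<subseteq> Kn_edges n"
  shows "alpha n \<Delta> \<in> invariants n"
proof -
  have "alpha n \<Delta> \<in> Hspace n"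
    using alpha_nonzero_imp_orbit[OF assms] gimg_subset_Kn_edges[OF _ assms] by (auto simp: Hspace_def)
  then show ?thesis using act_alpha[OF _ assms] by (simp add: invariants_def)
qed

lemma alpha_self:
  assumes sk: "skew_invariant n \<Delta>"
  shows "alpha n \<Delta> \<Delta> = 1"
proof -
  have \<Delta>: "\<Delta> \<subseteq> Kn_edges n" using sk by (simp add: skew_invariant_def)
  have "(\<Sum>\<sigma> \<in> Sn n. if gimg \<sigma> \<Delta> = \<Delta> then twist \<sigma> \<Delta> else 0) = (\<Sum>\<sigma> \<in> stab n \<Delta>. twist \<sigma> \<Delta>)"
    unfolding stab_def using finite_Sn by (simp add: sum.inter_filter)
  also have "\<dots> = of_nat (card (stab n \<Delta>))"
    using sk by (simp add: skew_invariant_def stab_def twist_def)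
  finally show ?thesis using alpha_eq[OF \<Delta>] card_stab_pos[OF \<Delta>] by simp
qed

subsection \<open>Invariant vectors\<close>

lemma invariant_gimg:
  assumes "v \<in> invariants n" and "\<sigma> \<in> Sn n" and "\<Delta> \<subseteq> Kn_edges n"
  shows "v (gimg \<sigma> \<Delta>) = twist \<sigma> \<Delta> * v \<Delta>"
  using act_gimg[OF assms(2,3), of v] assms(1,2) by (simp add: invariants_def)

lemma invariant_vanishes_if_not_skew_invariant:
  assumes v: "v \<in> invariants n" and not_skew: "\<not> skew_invariant n \<Gamma>"
  shows "v \<Gamma> = 0"
proof (rule ccontr)
  assume nz: "v \<Gamma> \<noteq> 0"
  then have \<Gamma>: "\<Gamma> \<subseteq> Kn_edges n" using v by (auto simp: invariants_def Hspace_def)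
  then obtain \<sigma> where \<sigma>: "\<sigma> \<in> Sn n" and fixed: "gimg \<sigma> \<Gamma> = \<Gamma>" and "sign \<sigma> * sgnE \<sigma> \<Gamma> \<noteq> 1"
    using not_skew by (auto simp: skew_invariant_def)
  then have "twist \<sigma> \<Gamma> \<noteq> 1" by (metis of_int_eq_1_iff twist_def)
  then have "twist \<sigma> \<Gamma> = -1" using twist_cases by blast
  then show False using invariant_gimg[OF v \<sigma> \<Gamma>] fixed nz by simp
qed

lemma invariant_eq_on_orbit:
  assumes v: "v \<in> invariants n" and \<sigma>0: "\<sigma>0 \<in> Sn n" and \<Delta>: "\<Delta> \<subseteq> Kn_edges n"
  shows "v \<Delta> * alpha n \<Delta> (gimg \<sigma>0 \<Delta>) = v (gimg \<sigma>0 \<Delta>)"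
proof -
  let ?\<Gamma> = "gimg \<sigma>0 \<Delta>"
  have orbit: "v \<Delta> * twist \<sigma> \<Delta> = v ?\<Gamma>" if "\<sigma> \<in> Sn n" "gimg \<sigma> \<Delta> = ?\<Gamma>" for \<sigma>
    using invariant_gimg[OF v that(1) \<Delta>] that(2) by (simp add: mult.commute)
  have "v \<Delta> * (\<Sum>\<sigma> \<in> Sn n. if gimg \<sigma> \<Delta> = ?\<Gamma> then twist \<sigma> \<Delta> else 0)
      = (\<Sum>\<sigma> \<in> Sn n. if gimg \<sigma> \<Delta> = ?\<Gamma> then v ?\<Gamma> else 0)"
    unfolding sum_distrib_left using orbit by (intro sum.cong) auto
  also have "\<dots> = of_nat (card {\<sigma> \<in> Sn n. gimg \<sigma> \<Delta> = ?\<Gamma>}) * v ?\<Gamma>"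
    using sum.inter_filter[OF finite_Sn, where P = "\<lambda>\<sigma>. gimg \<sigma> \<Delta> = ?\<Gamma>" and g = "\<lambda>_. v ?\<Gamma>"]
    by simp
  finally show ?thesis
    using card_coset_stab[OF \<sigma>0 \<Delta>] card_stab_pos[OF \<Delta>] by (simp add: alpha_eq[OF \<Delta>])
qed

subsection \<open>Orbit representatives\<close>

lemma sgn_reps_finite: "sgn_reps n R \<Longrightarrow> finite R"
  by (rule finite_subset[of _ "Pow (Kn_edges n)"])
    (auto simp: sgn_reps_def skew_invariant_def finite_Kn_edges)

lemma sgn_reps_subset_Kn_edges: "sgn_reps n R \<Longrightarrow> \<Delta> \<in> R \<Longrightarrow> \<Delta> \<subseteq> Kn_edges n"
  by (simp add: sgn_reps_def skew_invariant_def)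

lemma sgn_reps_orbits_disjoint:
  assumes R: "sgn_reps n R" and "\<Delta> \<in> R" "\<Delta>' \<in> R" and \<sigma>: "\<sigma> \<in> Sn n" and \<sigma>': "\<sigma>' \<in> Sn n"
    and eq: "gimg \<sigma> \<Delta> = gimg \<sigma>' \<Delta>'"
  shows "\<Delta> = \<Delta>'"
proof -
  have "gimg (inv \<sigma>' \<circ> \<sigma>) \<Delta> = \<Delta>'"
    using eq gimg_inv_gimg[OF \<sigma>' sgn_reps_subset_Kn_edges[OF R \<open>\<Delta>' \<in> R\<close>]] by (simp add: gimg_comp)
  then have "graph_iso n \<Delta> \<Delta>'"
    unfolding graph_iso_def using comp_in_Sn[OF inv_in_Sn[OF \<sigma>'] \<sigma>] by blast
  then show ?thesis using R assms(2,3) by (simp add: sgn_reps_def)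
qed

lemma sgn_reps_cover:
  assumes R: "sgn_reps n R" and sk: "skew_invariant n \<Gamma>"
  shows "\<exists>\<Delta> \<in> R. \<exists>\<sigma> \<in> Sn n. gimg \<sigma> \<Delta> = \<Gamma>"
proof -
  obtain \<Delta> \<sigma> where "\<Delta> \<in> R" "\<sigma> \<in> Sn n" "gimg \<sigma> \<Gamma> = \<Delta>"
    using R sk by (auto simp: sgn_reps_def graph_iso_def)
  moreover have "\<Gamma> \<subseteq> Kn_edges n" using sk by (simp add: skew_invariant_def)
  ultimately show ?thesis using gimg_inv_gimg inv_in_Sn by metis
qed

lemma sum_sgn_reps_alpha_orbit:
  assumes R: "sgn_reps n R" and \<Delta>0: "\<Delta>0 \<in> R" and \<sigma>0: "\<sigma>0 \<in> Sn n"
  shows "(\<Sum>\<Delta> \<in> R. c \<Delta> * alpha n \<Delta> (gimg \<sigma>0 \<Delta>0)) = c \<Delta>0 * alpha n \<Delta>0 (gimg \<sigma>0 \<Delta>0)"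
proof -
  have "alpha n \<Delta> (gimg \<sigma>0 \<Delta>0) = 0" if \<Delta>: "\<Delta> \<in> R - {\<Delta>0}" for \<Delta>
  proof (rule ccontr)
    assume "alpha n \<Delta> (gimg \<sigma>0 \<Delta>0) \<noteq> 0"
    then obtain \<sigma> where "\<sigma> \<in> Sn n" "gimg \<sigma> \<Delta> = gimg \<sigma>0 \<Delta>0"
      using alpha_nonzero_imp_orbit sgn_reps_subset_Kn_edges[OF R] \<Delta> by blast
    then have "\<Delta> = \<Delta>0" using sgn_reps_orbits_disjoint[OF R] \<Delta> \<Delta>0 \<sigma>0 by blast
    then show False using \<Delta> by simp
  qed
  then have "(\<Sum>\<Delta> \<in> R - {\<Delta>0}. c \<Delta> * alpha n \<Delta> (gimg \<sigma>0 \<Delta>0)) = 0" by simp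
  then show ?thesis using sum.remove[OF sgn_reps_finite[OF R] \<Delta>0, of "\<lambda>\<Delta>. c \<Delta> * alpha n \<Delta> (gimg \<sigma>0 \<Delta>0)"]
    by simp
qed

lemma sgn_reps_alpha_independent:
  assumes R: "sgn_reps n R" and zero: "(\<lambda>\<Gamma>. \<Sum>\<Delta> \<in> R. c \<Delta> * alpha n \<Delta> \<Gamma>) = (\<lambda>_. 0)"
    and \<Delta>: "\<Delta> \<in> R"
  shows "c \<Delta> = 0"
proof -
  have "gimg id \<Delta> = \<Delta>" using gimg_id sgn_reps_subset_Kn_edges[OF R \<Delta>] .
  then have "(\<Sum>\<Delta>' \<in> R. c \<Delta>' * alpha n \<Delta>' \<Delta>) = c \<Delta> * alpha n \<Delta> \<Delta>"
    using sum_sgn_reps_alpha_orbit[OF R \<Delta> id_in_Sn] by simp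
  moreover have "alpha n \<Delta> \<Delta> = 1" using R \<Delta> by (simp add: sgn_reps_def alpha_self)
  ultimately show ?thesis using fun_cong[OF zero, of \<Delta>] by simp
qed

lemma invariant_sgn_reps_expansion:
  assumes R: "sgn_reps n R" and v: "v \<in> invariants n"
  shows "v = (\<lambda>\<Gamma>. \<Sum>\<Delta> \<in> R. v \<Delta> * alpha n \<Delta> \<Gamma>)"
proof
  fix \<Gamma>
  show "v \<Gamma> = (\<Sum>\<Delta> \<in> R. v \<Delta> * alpha n \<Delta> \<Gamma>)"
  proof (cases "\<exists>\<Delta>0 \<in> R. \<exists>\<sigma>0 \<in> Sn n. gimg \<sigma>0 \<Delta>0 = \<Gamma>")
    case True
    then obtain \<Delta>0 \<sigma>0 where \<Delta>0: "\<Delta>0 \<in> R" and \<sigma>0: "\<sigma>0 \<in> Sn n" and \<Gamma>: "gimg \<sigma>0 \<Delta>0 = \<Gamma>"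
      by blast
    show ?thesis
      using sum_sgn_reps_alpha_orbit[OF R \<Delta>0 \<sigma>0, of v]
        invariant_eq_on_orbit[OF v \<sigma>0 sgn_reps_subset_Kn_edges[OF R \<Delta>0]] \<Gamma>
      by simp
  next
    case False
    then have "\<not> skew_invariant n \<Gamma>" using sgn_reps_cover[OF R] by blast
    then have "v \<Gamma> = 0" by (rule invariant_vanishes_if_not_skew_invariant[OF v])
    moreover have "alpha n \<Delta> \<Gamma> = 0" if \<Delta>: "\<Delta> \<in> R" for \<Delta>
      using False alpha_nonzero_imp_orbit[OF sgn_reps_subset_Kn_edges[OF R \<Delta>]] \<Delta> by blast
    ultimately show ?thesis by simp
  qed
qed

theorem theorem2p21:
  fixes n :: nat and R :: "(nat \<times> nat) set set"
  assumes "n \<ge> 1" and "sgn_reps n R"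
  shows "(\<forall>\<Delta>\<in>R. alpha n \<Delta> \<in> invariants n \<and>
              (\<forall>\<Gamma>. alpha n \<Delta> \<Gamma> \<noteq> 0 \<longrightarrow> card \<Gamma> = card \<Delta>))
       \<and> (\<forall>c :: (nat \<times> nat) set \<Rightarrow> rat.
              (\<lambda>\<Gamma>. \<Sum>\<Delta>\<in>R. c \<Delta> * alpha n \<Delta> \<Gamma>) = (\<lambda>_. 0) \<longrightarrow> (\<forall>\<Delta>\<in>R. c \<Delta> = 0))
       \<and> (\<forall>v\<in>invariants n. \<exists>c :: (nat \<times> nat) set \<Rightarrow> rat.
              v = (\<lambda>\<Gamma>. \<Sum>\<Delta>\<in>R. c \<Delta> * alpha n \<Delta> \<Gamma>))"
proof (intro conjI ballI allI impI)
  fix \<Delta> assume "\<Delta> \<in> R"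
  then have \<Delta>: "\<Delta> \<subseteq> Kn_edges n" by (rule sgn_reps_subset_Kn_edges[OF assms(2)])
  show "alpha n \<Delta> \<in> invariants n" using \<Delta> by (rule alpha_in_invariants)
  fix \<Gamma> assume "alpha n \<Delta> \<Gamma> \<noteq> 0"
  then show "card \<Gamma> = card \<Delta>" using \<Delta> card_eq_if_alpha_nonzero by blast
next
  fix c \<Delta> assume "(\<lambda>\<Gamma>. \<Sum>\<Delta>\<in>R. c \<Delta> * alpha n \<Delta> \<Gamma>) = (\<lambda>_. 0)" and "\<Delta> \<in> R"
  then show "c \<Delta> = 0" by (rule sgn_reps_alpha_independent[OF assms(2)])
next
  fix v assume "v \<in> invariants n"
  then show "\<exists>c. v = (\<lambda>\<Gamma>. \<Sum>\<Delta>\<in>R. c \<Delta> * alpha n \<Delta> \<Gamma>)"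
    using invariant_sgn_reps_expansion[OF assms(2)] by blast
qed

end
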